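(* Let $(X,\|\cdot\|_X)$ be a Banach space, $\mathcal{K}\subset X$ compact, and $\gamma_n=C'n^\delta\lambda^n$ with fixed $\delta\in\mathbb{R}$, $\lambda>1$, $C'>0$. (i) If for some constants $c_1>0$, $\alpha>0$, $\beta\in\mathbb{R}$ we have $\varepsilon_n(\mathcal{K})_X>c_1\frac{(\log_2n)^\beta}{n^\alpha}$ for all $n\ge2$, then there exists $C>0$ such that $d_n^{\gamma_n}(\mathcal{K})_X\ge C\frac{(\log_2n)^\beta}{n^{2\alpha}}$ for all $n\ge2$. (ii) If for some constants $c_1>0$, $\alpha>0$ we have $\varepsilon_n(\mathcal{K})_X>c_1(\log_2n)^{-\alpha}$ for all $n\ge2$, then there exists $C>0$ such that $d_n^{\gamma_n}(\mathcal{K})_X\ge C(\log_2n)^{-\alpha}$ for all $n\ge2$.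
   Context: For $m\ge0$, the entropy number $\varepsilon_m(\mathcal{K})_X$ is the infimum of all $\varepsilon>0$ such that $\mathcal{K}$ is covered by $2^m$ closed balls of radius $\varepsilon$ with centers in $X$. For $k\ge1$ and a norm $\|\cdot\|_{Y_k}$ on $\mathbb{R}^k$ let $B_{Y_k}=\{y\in\mathbb{R}^k:\|y\|_{Y_k}\le1\}$; for $\gamma\ge0$, $d^\gamma(\mathcal{K},Y_k)_X=\inf_{\Phi}\sup_{f\in\mathcal{K}}\inf_{y\in B_{Y_k}}\|f-\Phi(y)\|_X$, the infimum over all maps $\Phi:B_{Y_k}\to X$ with $\|\Phi(y)-\Phi(y')\|_X\le\gamma\|y-y'\|_{Y_k}$; and the Lipschitz width is $d_n^\gamma(\mathcal{K})_X=\inf_{1\le k\le n}\inf_{\|\cdot\|_{Y_k}}d^\gamma(\mathcal{K},Y_k)_X$, the inner infimum over all norms on $\mathbb{R}^k$. *)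

theory Defs
  imports "HOL-Analysis.Analysis"
begin

text \<open>Entropy number: infimum of all eps > 0 such that K is covered by 2^m closed
  balls of radius eps with centres in X (the ambient space, here the type 'a).
  "Covered by 2^m balls" is rendered as covered by at most 2^m balls
  (balls may repeat).\<close>
definition entropy_number :: "'a::real_normed_vector set \<Rightarrow> nat \<Rightarrow> real" where
  "entropy_number K m = Inf {eps. eps > 0 \<and>
      (\<exists>C. finite C \<and> card C \<le> 2 ^ m \<and> K \<subseteq> (\<Union>c\<in>C. cball c eps))}"

text \<open>R^k is represented as the functions nat => real vanishing outside {..<k}.\<close>
definition Rk :: "nat \<Rightarrow> (nat \<Rightarrow> real) set" where
  "Rk k = {y. \<forall>i\<ge>k. y i = 0}"

definition is_norm_on :: "nat \<Rightarrow> ((nat \<Rightarrow> real) \<Rightarrow> real) \<Rightarrow> bool" where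
  "is_norm_on k N \<longleftrightarrow>
     (\<forall>y\<in>Rk k. 0 \<le> N y \<and> (N y = 0 \<longleftrightarrow> y = (\<lambda>_. 0))) \<and>
     (\<forall>y\<in>Rk k. \<forall>c::real. N (\<lambda>i. c * y i) = \<bar>c\<bar> * N y) \<and>
     (\<forall>y\<in>Rk k. \<forall>z\<in>Rk k. N (\<lambda>i. y i + z i) \<le> N y + N z)"

definition unit_ball :: "nat \<Rightarrow> ((nat \<Rightarrow> real) \<Rightarrow> real) \<Rightarrow> (nat \<Rightarrow> real) set" where
  "unit_ball k N = {y \<in> Rk k. N y \<le> 1}"

text \<open>Phi : B_{Y_k} -> X is gamma-Lipschitz (only its values on the ball matter).\<close>
definition lip_map :: "real \<Rightarrow> nat \<Rightarrow> ((nat \<Rightarrow> real) \<Rightarrow> real) \<Rightarrow> ((nat \<Rightarrow> real) \<Rightarrow> 'a::real_normed_vector) \<Rightarrow> bool" where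
  "lip_map \<gamma> k N \<Phi> \<longleftrightarrow>
     (\<forall>y\<in>unit_ball k N. \<forall>y'\<in>unit_ball k N.
        norm (\<Phi> y - \<Phi> y') \<le> \<gamma> * N (\<lambda>i. y i - y' i))"

definition lip_dist :: "'a::real_normed_vector set \<Rightarrow> real \<Rightarrow> nat \<Rightarrow> ((nat \<Rightarrow> real) \<Rightarrow> real) \<Rightarrow> real" where
  "lip_dist K \<gamma> k N = Inf {(SUP f\<in>K. INF y\<in>unit_ball k N. norm (f - \<Phi> y)) | \<Phi>. lip_map \<gamma> k N \<Phi>}"

definition lipschitz_width :: "'a::real_normed_vector set \<Rightarrow> real \<Rightarrow> nat \<Rightarrow> real" where
  "lipschitz_width K \<gamma> n = Inf {lip_dist K \<gamma> k N | k N. 1 \<le> k \<and> k \<le> n \<and> is_norm_on k N}"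

end

theory Submission
  imports Defs "Jordan_Normal_Form.Determinant" "HOL-Real_Asymp.Real_Asymp"
begin

text \<open>If a \<open>\<gamma>\<close>-Lipschitz image of the unit ball of a \<open>k\<close>-dimensional normed space (\<open>k \<le> n\<close>)
  approximates \<open>K\<close> within \<open>t\<close>, then the image of an \<open>r\<close>-net of the ball with \<open>\<gamma> r \<le> t\<close> is a
  \<open>2 t\<close>-net of \<open>K\<close>. Coordinates with respect to a frame of nearly maximal determinant are
  bounded by 2, so the ball has an \<open>r\<close>-net of at most \<open>(4 k / r + 1)\<^sup>k\<close> points, whatever the
  norm. Hence \<open>d\<^sub>n\<^sup>\<gamma>(K) < t\<close> forces \<open>\<epsilon>\<^sub>m(K) \<le> 2 t\<close> for some \<open>m \<approx> n log (n \<gamma> / t)\<close>, which is of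
  order \<open>n\<^sup>2\<close> for \<open>\<gamma>\<^sub>n = C' n\<^sup>\<delta> \<lambda>\<^sup>n\<close> and polynomially small \<open>t\<close>. So the lower bound for \<open>\<epsilon>\<^sub>m\<close> at
  \<open>m \<sim> n\<^sup>2\<close> transfers to \<open>d\<^sub>n\<close>, squaring the polynomial part of the rate and changing the
  logarithmic part only by a constant factor.\<close>

section \<open>Norms on finite-dimensional coordinate spaces\<close>

definition unit_vec :: "nat \<Rightarrow> nat \<Rightarrow> real" where
  "unit_vec j = (\<lambda>i. if i = j then 1 else 0)"

lemma Rk_unit_vec: "j < k \<Longrightarrow> unit_vec j \<in> Rk k"
  by (auto simp: Rk_def unit_vec_def)

lemma Rk_zero: "(\<lambda>_. 0) \<in> Rk k"
  by (auto simp: Rk_def)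

lemma Rk_diff: "y \<in> Rk k \<Longrightarrow> z \<in> Rk k \<Longrightarrow> (\<lambda>i. y i - z i) \<in> Rk k"
  by (auto simp: Rk_def)

lemma Rk_sum: "(\<And>i. i \<in> A \<Longrightarrow> v i \<in> Rk k) \<Longrightarrow> (\<lambda>j. \<Sum>i\<in>A. c i * v i j) \<in> Rk k"
  by (auto simp: Rk_def)

lemma Rk_eq_sum_unit_vec: "y \<in> Rk k \<Longrightarrow> (\<lambda>j. \<Sum>i<k. y i * unit_vec i j) = y"
  by (rule ext) (auto simp: unit_vec_def Rk_def if_distrib cong: if_cong)

lemma is_norm_on_zero: "is_norm_on k N \<Longrightarrow> N (\<lambda>_. 0) = 0"
  unfolding is_norm_on_def using Rk_zero by blast

lemma is_norm_on_nonneg: "is_norm_on k N \<Longrightarrow> y \<in> Rk k \<Longrightarrow> 0 \<le> N y"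
  unfolding is_norm_on_def by blast

lemma is_norm_on_pos: "is_norm_on k N \<Longrightarrow> y \<in> Rk k \<Longrightarrow> y \<noteq> (\<lambda>_. 0) \<Longrightarrow> 0 < N y"
  unfolding is_norm_on_def by (metis order_le_less)

lemma is_norm_on_scale: "is_norm_on k N \<Longrightarrow> y \<in> Rk k \<Longrightarrow> N (\<lambda>i. c * y i) = \<bar>c\<bar> * N y"
  unfolding is_norm_on_def by blast

lemma is_norm_on_triangle:
  "is_norm_on k N \<Longrightarrow> y \<in> Rk k \<Longrightarrow> z \<in> Rk k \<Longrightarrow> N (\<lambda>i. y i + z i) \<le> N y + N z"
  unfolding is_norm_on_def by blast

lemma is_norm_on_minus_commute:
  assumes "is_norm_on k N" "y \<in> Rk k" "z \<in> Rk k"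
  shows "N (\<lambda>i. y i - z i) = N (\<lambda>i. z i - y i)"
  using is_norm_on_scale[OF assms(1) Rk_diff[OF assms(2,3)], of "-1"] by simp

lemma is_norm_on_sum_le:
  assumes N: "is_norm_on k N" and "finite A" and "\<And>i. i \<in> A \<Longrightarrow> v i \<in> Rk k"
  shows "N (\<lambda>j. \<Sum>i\<in>A. c i * v i j) \<le> (\<Sum>i\<in>A. \<bar>c i\<bar> * N (v i))"
  using assms(2,3)
proof (induction A rule: finite_induct)
  case empty
  then show ?case using is_norm_on_zero[OF N] by simp
next
  case (insert a A)
  have "N (\<lambda>j. \<Sum>i\<in>insert a A. c i * v i j) = N (\<lambda>j. c a * v a j + (\<Sum>i\<in>A. c i * v i j))"
    using insert by simp
  also have "\<dots> \<le> N (\<lambda>j. c a * v a j) + N (\<lambda>j. \<Sum>i\<in>A. c i * v i j)"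
    using insert.prems Rk_sum[of "{a}" v k c] Rk_sum[of A v k c]
    by (intro is_norm_on_triangle[OF N]) auto
  also have "\<dots> \<le> \<bar>c a\<bar> * N (v a) + (\<Sum>i\<in>A. \<bar>c i\<bar> * N (v i))"
    using is_norm_on_scale[OF N, of "v a" "c a"] insert by auto
  finally show ?case using insert by simp
qed

lemma is_norm_on_le_sum_coords:
  assumes "is_norm_on k N" "y \<in> Rk k"
  shows "N y \<le> (\<Sum>i<k. \<bar>y i\<bar> * N (unit_vec i))"
  using is_norm_on_sum_le[OF assms(1), of "{..<k}" unit_vec y] Rk_unit_vec Rk_eq_sum_unit_vec[OF assms(2)]
  by auto

lemma is_norm_on_diff_le:
  assumes N: "is_norm_on k N" and x: "x \<in> Rk k" and y: "y \<in> Rk k"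
  shows "\<bar>N y - N x\<bar> \<le> (\<Sum>i<k. \<bar>y i - x i\<bar> * N (unit_vec i))"
proof -
  have "N y = N (\<lambda>i. x i + (y i - x i))" by simp
  also have "\<dots> \<le> N x + N (\<lambda>i. y i - x i)" by (rule is_norm_on_triangle[OF N x Rk_diff[OF y x]])
  finally have "N y \<le> N x + N (\<lambda>i. y i - x i)" .
  moreover have "N x = N (\<lambda>i. y i + (x i - y i))" by simp
  then have "N x \<le> N y + N (\<lambda>i. y i - x i)"
    using is_norm_on_triangle[OF N y Rk_diff[OF x y]] is_norm_on_minus_commute[OF N x y] by simp
  moreover have "N (\<lambda>i. y i - x i) \<le> (\<Sum>i<k. \<bar>y i - x i\<bar> * N (unit_vec i))"
    using is_norm_on_le_sum_coords[OF N Rk_diff[OF y x]] by simp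
  ultimately show ?thesis by linarith
qed

lemma continuous_on_is_norm_on:
  assumes N: "is_norm_on k N" and S: "S \<subseteq> Rk k"
  shows "continuous_on S N"
  unfolding continuous_on_def
proof
  fix x assume "x \<in> S"
  then have x: "x \<in> Rk k" using S by auto
  define g where "g = (\<lambda>y::nat\<Rightarrow>real. \<Sum>i<k. \<bar>y i - x i\<bar> * N (unit_vec i))"
  have "continuous_on UNIV g"
    unfolding g_def by (intro continuous_intros continuous_on_product_coordinates)
  moreover have "g x = 0" unfolding g_def by simp
  ultimately have g: "(g \<longlongrightarrow> 0) (at x within S)"
    by (metis continuous_on_def UNIV_I continuous_on_subset subset_UNIV tendsto_within_subset)
  have "\<forall>\<^sub>F y in at x within S. y \<in> S"
    by (rule eventually_at_topological[THEN iffD2]) auto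
  then have near: "\<forall>\<^sub>F y in at x within S. \<bar>N y - N x\<bar> \<le> g y"
    by (rule eventually_mono) (use S is_norm_on_diff_le[OF N x] g_def in auto)
  show "(N \<longlongrightarrow> N x) (at x within S)"
  proof (rule tendsto_sandwich[where f = "\<lambda>y. N x - g y" and h = "\<lambda>y. N x + g y"])
    show "\<forall>\<^sub>F y in at x within S. N x - g y \<le> N y" "\<forall>\<^sub>F y in at x within S. N y \<le> N x + g y"
      using near by (auto elim: eventually_mono)
    show "((\<lambda>y. N x - g y) \<longlongrightarrow> N x) (at x within S)" "((\<lambda>y. N x + g y) \<longlongrightarrow> N x) (at x within S)"
      using tendsto_diff[OF tendsto_const g] tendsto_add[OF tendsto_const g] by simp_all
  qed
qed

lemma compact_Rk_l1_sphere: "compact {y \<in> Rk k. (\<Sum>j<k. \<bar>y j\<bar>) = 1}"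
proof -
  let ?S = "{y \<in> Rk k. (\<Sum>j<k. \<bar>y j\<bar>) = 1}"
  let ?T = "Pi UNIV (\<lambda>i. if i < k then {-1..1} else {0::real})"
  have "compactin (product_topology (\<lambda>i. euclidean) UNIV) (PiE UNIV (\<lambda>i. if i < k then {-1..1} else {0::real}))"
    by (subst compactin_PiE) auto
  then have "compact ?T"
    by (simp add: euclidean_product_topology PiE_UNIV_domain)
  have Rk_eq: "Rk k = {y. \<forall>i. k \<le> i \<longrightarrow> y i = 0}" by (auto simp: Rk_def)
  have "closed (Rk k)"
    unfolding Rk_eq
    by (rule closed_Collect_all, rule closed_Collect_imp) (auto intro!: closed_Collect_eq continuous_intros)
  moreover have "closed {y::nat\<Rightarrow>real. (\<Sum>j<k. \<bar>y j\<bar>) = 1}"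
    by (auto intro!: closed_Collect_eq continuous_intros)
  ultimately have "closed ?S"
    by (simp add: Collect_conj_eq closed_Int)
  have "?S \<subseteq> ?T"
  proof
    fix y assume y: "y \<in> ?S"
    have "\<bar>y i\<bar> \<le> 1" if "i < k" for i
      using y that member_le_sum[of i "{..<k}" "\<lambda>j. \<bar>y j\<bar>"] by simp
    with y show "y \<in> ?T" by (auto simp: Rk_def abs_le_iff)
  qed
  then show ?thesis
    using compact_Int_closed[OF \<open>compact ?T\<close> \<open>closed ?S\<close>] by (simp add: Int_absorb1)
qed

lemma unit_ball_coords_bounded:
  assumes N: "is_norm_on k N"
  shows "\<exists>M. \<forall>y\<in>unit_ball k N. \<forall>j. \<bar>y j\<bar> \<le> M"
proof (cases "k = 0")
  case True
  then show ?thesis by (intro exI[of _ 0]) (auto simp: unit_ball_def Rk_def)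
next
  case False
  define S where "S = {y \<in> Rk k. (\<Sum>j<k. \<bar>y j\<bar>) = 1}"
  have "unit_vec 0 \<in> S"
    using False Rk_unit_vec[of 0 k] by (simp add: S_def unit_vec_def)
  then obtain y0 where y0: "y0 \<in> S" and min: "\<And>y. y \<in> S \<Longrightarrow> N y0 \<le> N y"
    using continuous_attains_inf[OF compact_Rk_l1_sphere[of k, folded S_def] _ continuous_on_is_norm_on[OF N]]
    by (auto simp: S_def)
  have "y0 \<noteq> (\<lambda>_. 0)" using y0 by (auto simp: S_def)
  then have c: "0 < N y0" using is_norm_on_pos[OF N] y0 by (auto simp: S_def)
  show ?thesis
  proof (intro exI[of _ "1 / N y0"] ballI allI)
    fix y j assume "y \<in> unit_ball k N"
    then have y: "y \<in> Rk k" and Ny: "N y \<le> 1" by (auto simp: unit_ball_def)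
    define \<sigma> where "\<sigma> = (\<Sum>j<k. \<bar>y j\<bar>)"
    have yj: "\<bar>y j\<bar> \<le> \<sigma>"
    proof (cases "j < k")
      case True then show ?thesis unfolding \<sigma>_def by (intro member_le_sum) auto
    next
      case False then show ?thesis using y unfolding \<sigma>_def by (auto simp: Rk_def intro: sum_nonneg)
    qed
    show "\<bar>y j\<bar> \<le> 1 / N y0"
    proof (cases "\<sigma> = 0")
      case True then show ?thesis using yj c by simp
    next
      case False
      then have sp: "\<sigma> > 0" unfolding \<sigma>_def using sum_nonneg[of "{..<k}" "\<lambda>j. \<bar>y j\<bar>"] by linarith
      have "(\<lambda>i. (1/\<sigma>) * y i) \<in> S" using y sp unfolding S_def \<sigma>_def
        by (auto simp: Rk_def abs_mult sum_divide_distrib[symmetric])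
      then have "N y0 \<le> N (\<lambda>i. (1/\<sigma>) * y i)" by (rule min)
      also have "\<dots> = (1/\<sigma>) * N y" using is_norm_on_scale[OF N y, of "1/\<sigma>"] sp by simp
      finally have "\<sigma> \<le> 1 / N y0" using Ny c sp by (simp add: field_simps)
      then show ?thesis using yj by linarith
    qed
  qed
qed

section \<open>Nets of unit balls, uniformly in the norm\<close>

definition colmat :: "nat \<Rightarrow> (nat \<Rightarrow> nat \<Rightarrow> real) \<Rightarrow> real Matrix.mat" where
  "colmat k Ys = Matrix.mat k k (\<lambda>(i,j). Ys j i)"

lemma colmat_carrier: "colmat k Ys \<in> carrier_mat k k"
  by (simp add: colmat_def)

lemma det_colmat_bound:
  assumes M: "\<And>j i. j < k \<Longrightarrow> \<bar>Ys j i\<bar> \<le> M"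
  shows "\<bar>Determinant.det (colmat k Ys)\<bar> \<le> fact k * M ^ k"
proof -
  let ?P = "{p. p permutes {0..<k}}"
  have "\<bar>Determinant.det (colmat k Ys)\<bar> = \<bar>\<Sum>p\<in>?P. signof p * (\<Prod>i = 0..<k. colmat k Ys $$ (i, p i))\<bar>"
    by (simp add: det_def'[OF colmat_carrier])
  also have "\<dots> \<le> (\<Sum>p\<in>?P. \<bar>signof p * (\<Prod>i = 0..<k. colmat k Ys $$ (i, p i))\<bar>)"
    by (rule sum_abs)
  also have "\<dots> \<le> (\<Sum>p\<in>?P. M ^ k)"
  proof (rule sum_mono)
    fix p assume "p \<in> ?P"
    then have pk: "\<And>i. i < k \<Longrightarrow> p i < k"
      by (metis atLeast0LessThan lessThan_iff mem_Collect_eq permutes_in_image)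
    have "\<bar>signof p * (\<Prod>i = 0..<k. colmat k Ys $$ (i, p i))\<bar> = (\<Prod>i = 0..<k. \<bar>Ys (p i) i\<bar>)"
      using pk by (simp add: abs_mult abs_prod colmat_def sign_def)
    also have "\<dots> \<le> (\<Prod>i = 0..<k. M)"
      by (rule prod_mono) (use pk M in auto)
    finally show "\<bar>signof p * (\<Prod>i = 0..<k. colmat k Ys $$ (i, p i))\<bar> \<le> M ^ k" by simp
  qed
  also have "\<dots> = fact k * M ^ k"
    using card_permutations[of "{0..<k}" k] by simp
  finally show ?thesis .
qed

lemma det_colmat_diagonal: "Determinant.det (colmat k (\<lambda>j i. d j * unit_vec j i)) = (\<Prod>j<k. d j)"
proof -
  let ?D = "colmat k (\<lambda>j i. d j * unit_vec j i)"
  have "upper_triangular ?D"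
    by (auto simp: upper_triangular_def colmat_def unit_vec_def)
  then have "Determinant.det ?D = prod_list (diag_mat ?D)"
    by (rule det_upper_triangular[OF _ colmat_carrier])
  also have "\<dots> = (\<Prod>j\<in>set [0..<k]. ?D $$ (j,j))"
    by (simp add: diag_mat_def prod.distinct_set_conv_list[symmetric]) (simp add: colmat_def)
  also have "\<dots> = (\<Prod>j<k. d j)"
    by (rule prod.cong) (auto simp: colmat_def unit_vec_def)
  finally show ?thesis .
qed

text \<open>The supremum of the frame determinants is finite since the ball is bounded, and positive
  because of a rescaled standard basis.\<close>

lemma unit_ball_near_maximal_frame:
  assumes N: "is_norm_on k N"
  shows "\<exists>Ys. (\<forall>j<k. Ys j \<in> unit_ball k N) \<and>
    (\<forall>Zs. (\<forall>j<k. Zs j \<in> unit_ball k N) \<longrightarrow>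
       \<bar>Determinant.det (colmat k Zs)\<bar> < 2 * \<bar>Determinant.det (colmat k Ys)\<bar>)"
proof -
  obtain M where M: "\<And>y j. y \<in> unit_ball k N \<Longrightarrow> \<bar>y j\<bar> \<le> M"
    using unit_ball_coords_bounded[OF N] by blast
  define Dset where "Dset = {\<bar>Determinant.det (colmat k Ys)\<bar> | Ys. \<forall>j<k. Ys j \<in> unit_ball k N}"
  have bdd: "bdd_above Dset"
    unfolding Dset_def bdd_above_def using det_colmat_bound M by blast
  define Ys1 where "Ys1 = (\<lambda>j i. (1 / N (unit_vec j)) * unit_vec j i)"
  have Nunit: "j < k \<Longrightarrow> 0 < N (unit_vec j)" for j
    using is_norm_on_pos[OF N Rk_unit_vec, of j] by (auto simp: unit_vec_def fun_eq_iff)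
  have "Ys1 j \<in> unit_ball k N" if j: "j < k" for j
  proof -
    have "N (Ys1 j) = 1"
      using is_norm_on_scale[OF N Rk_unit_vec[OF j], of "1 / N (unit_vec j)"] Nunit[OF j]
      unfolding Ys1_def by simp
    then show ?thesis using Rk_unit_vec[OF j]
      by (auto simp: unit_ball_def Ys1_def Rk_def unit_vec_def)
  qed
  then have Ys1_in: "\<bar>Determinant.det (colmat k Ys1)\<bar> \<in> Dset" unfolding Dset_def by blast
  have "Determinant.det (colmat k Ys1) \<noteq> 0"
    unfolding Ys1_def det_colmat_diagonal using Nunit by force
  moreover have "\<bar>Determinant.det (colmat k Ys1)\<bar> \<le> Sup Dset" by (rule cSup_upper[OF Ys1_in bdd])
  ultimately have "Sup Dset / 2 < Sup Dset" by linarith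
  then obtain x where "x \<in> Dset" "Sup Dset / 2 < x"
    using less_cSup_iff[of Dset "Sup Dset / 2"] Ys1_in bdd by blast
  then obtain Ys where Ys: "\<forall>j<k. Ys j \<in> unit_ball k N"
    and big: "Sup Dset < 2 * \<bar>Determinant.det (colmat k Ys)\<bar>"
    unfolding Dset_def by auto
  have "\<bar>Determinant.det (colmat k Zs)\<bar> < 2 * \<bar>Determinant.det (colmat k Ys)\<bar>"
    if "\<forall>j<k. Zs j \<in> unit_ball k N" for Zs
    using cSup_upper[OF _ bdd, of "\<bar>Determinant.det (colmat k Zs)\<bar>"] that big
    unfolding Dset_def by fastforce
  with Ys show ?thesis by blast
qed

text \<open>An Auerbach-type basis: by Cramer's rule, the coefficients of a ball point with respect
  to a near-maximal frame are ratios of frame determinants, hence bounded by 2.\<close>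

lemma unit_ball_bounded_basis:
  assumes N: "is_norm_on k N"
  shows "\<exists>Ys a. (\<forall>j<k. Ys j \<in> unit_ball k N) \<and>
     (\<forall>y\<in>unit_ball k N. (\<forall>i<k. \<bar>a y i\<bar> \<le> 2) \<and> y = (\<lambda>j. \<Sum>i<k. a y i * Ys i j))"
proof -
  obtain Ys where Ys: "\<forall>j<k. Ys j \<in> unit_ball k N"
    and max: "\<And>Zs. \<forall>j<k. Zs j \<in> unit_ball k N \<Longrightarrow>
       \<bar>Determinant.det (colmat k Zs)\<bar> < 2 * \<bar>Determinant.det (colmat k Ys)\<bar>"
    using unit_ball_near_maximal_frame[OF N] by blast
  define Y where "Y = colmat k Ys"
  have Y: "Y \<in> carrier_mat k k" unfolding Y_def by (rule colmat_carrier)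
  have "Determinant.det Y \<noteq> 0" using max[OF Ys] unfolding Y_def by auto
  from det_non_zero_imp_unit[OF Y this, of undefined]
  obtain B where B: "B \<in> carrier_mat k k" and YB: "Y * B = 1\<^sub>m k"
    by (auto simp: Units_def ring_mat_def)
  define a where "a = (\<lambda>y i. vec_index (B *\<^sub>v Matrix.vec k y) i)"
  show ?thesis
  proof (intro exI[of _ Ys] exI[of _ a] conjI Ys ballI)
    fix y assume yB: "y \<in> unit_ball k N"
    define x where "x = B *\<^sub>v Matrix.vec k y"
    have x: "x \<in> carrier_vec k" using B by (simp add: x_def)
    have Yx: "Y *\<^sub>v x = Matrix.vec k y"
      unfolding x_def using B Y YB by (metis assoc_mult_mat_vec one_mult_mat_vec vec_carrier)
    show "y = (\<lambda>j. \<Sum>i<k. a y i * Ys i j)"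
    proof
      fix j
      show "y j = (\<Sum>i<k. a y i * Ys i j)"
      proof (cases "j < k")
        case True
        then have "y j = vec_index (Y *\<^sub>v x) j" using Yx by simp
        also have "\<dots> = (\<Sum>i<k. a y i * Ys i j)"
          using True Y x
          by (simp add: Y_def colmat_def mult_mat_vec_def scalar_prod_def atLeast0LessThan
              a_def x_def mult.commute)
        finally show ?thesis .
      next
        case False
        then show ?thesis using yB Ys by (auto simp: Rk_def unit_ball_def)
      qed
    qed
    show "\<forall>i<k. \<bar>a y i\<bar> \<le> 2"
    proof (intro allI impI)
      fix i assume i: "i < k"
      have "replace_col Y (Y *\<^sub>v x) i = colmat k (Ys(i := y))"
        unfolding Yx by (rule eq_matI) (auto simp: replace_col_def Y_def colmat_def)
      moreover have "\<forall>j<k. (Ys(i := y)) j \<in> unit_ball k N" using Ys yB by auto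
      ultimately have "\<bar>Determinant.det (replace_col Y (Y *\<^sub>v x) i)\<bar> < 2 * \<bar>Determinant.det Y\<bar>"
        using max unfolding Y_def by metis
      then have "\<bar>vec_index x i\<bar> * \<bar>Determinant.det Y\<bar> < 2 * \<bar>Determinant.det Y\<bar>"
        by (simp add: cramer_lemma_mat[OF Y x i] abs_mult)
      then show "\<bar>a y i\<bar> \<le> 2" by (simp add: a_def x_def mult_less_cancel_right)
    qed
  qed
qed

lemma floor_eq_imp_dist_less_1:
  fixes x y :: real
  assumes "\<lfloor>x\<rfloor> = \<lfloor>y\<rfloor>"
  shows "\<bar>x - y\<bar> < 1"
proof -
  have "of_int \<lfloor>x\<rfloor> \<le> x" "x < of_int \<lfloor>x\<rfloor> + 1" "of_int \<lfloor>y\<rfloor> \<le> y" "y < of_int \<lfloor>y\<rfloor> + 1"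
    by linarith+
  with assms show ?thesis by (simp add: abs_less_iff) linarith
qed

lemma finite_grid_net:
  fixes a :: "'b \<Rightarrow> nat \<Rightarrow> real"
  assumes h: "0 < h" and c: "0 \<le> c" and bounded: "\<And>y i. y \<in> B \<Longrightarrow> i < k \<Longrightarrow> \<bar>a y i\<bar> \<le> c"
  shows "\<exists>P. finite P \<and> P \<subseteq> B \<and> real (card P) \<le> (2 * c / h + 1) ^ k \<and>
           (\<forall>y\<in>B. \<exists>p\<in>P. \<forall>i<k. \<bar>a y i - a p i\<bar> \<le> h)"
proof -
  define g where "g = (\<lambda>y. restrict (\<lambda>i. \<lfloor>(a y i + c) / h\<rfloor>) {..<k})"
  define L where "L = \<lfloor>2 * c / h\<rfloor>"
  define P where "P = inv_into B g ` g ` B"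
  have gB: "g ` B \<subseteq> PiE {..<k} (\<lambda>_. {0..L})"
  proof
    fix v assume "v \<in> g ` B"
    then obtain y where y: "y \<in> B" and v: "v = g y" by auto
    have "0 \<le> (a y i + c) / h \<and> (a y i + c) / h \<le> 2 * c / h" if "i < k" for i
      using bounded[OF y that] h by (auto simp: divide_right_mono abs_le_iff)
    then show "v \<in> PiE {..<k} (\<lambda>_. {0..L})"
      unfolding v g_def L_def by (auto intro!: floor_mono)
  qed
  have fin: "finite (PiE {..<k} (\<lambda>_. {0..L}))" by (simp add: finite_PiE)
  have "real (card P) \<le> real (card (g ` B))"
    unfolding P_def using finite_subset[OF gB fin] by (simp add: card_image_le)
  also have "\<dots> \<le> real (nat (L + 1)) ^ k"
    using card_mono[OF fin gB] by (simp add: card_PiE flip: of_nat_power)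
  also have "\<dots> \<le> (2 * c / h + 1) ^ k"
    using c h by (intro power_mono) (auto simp: L_def)
  finally have card: "real (card P) \<le> (2 * c / h + 1) ^ k" .
  show ?thesis
  proof (intro exI[of _ P] conjI ballI card)
    show "finite P" unfolding P_def using finite_subset[OF gB fin] by simp
    show "P \<subseteq> B" unfolding P_def by (auto intro: inv_into_into)
    fix y assume y: "y \<in> B"
    define p where "p = inv_into B g (g y)"
    have "p \<in> P" unfolding p_def P_def using y by blast
    moreover have "\<bar>a y i - a p i\<bar> \<le> h" if i: "i < k" for i
    proof -
      have "g p i = g y i" unfolding p_def using y by (simp add: f_inv_into_f)
      then have "\<lfloor>(a y i + c) / h\<rfloor> = \<lfloor>(a p i + c) / h\<rfloor>"
        using i by (simp add: g_def)
      then have "\<bar>(a y i + c) / h - (a p i + c) / h\<bar> < 1" by (rule floor_eq_imp_dist_less_1)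
      then show ?thesis using h by (simp add: diff_divide_distrib[symmetric] abs_divide)
    qed
    ultimately show "\<exists>p\<in>P. \<forall>i<k. \<bar>a y i - a p i\<bar> \<le> h" by blast
  qed
qed

lemma unit_ball_finite_net:
  assumes N: "is_norm_on k N" and k: "1 \<le> k" and r: "0 < r"
  shows "\<exists>P. finite P \<and> P \<subseteq> unit_ball k N \<and> real (card P) \<le> (4 * real k / r + 1) ^ k \<and>
           (\<forall>y\<in>unit_ball k N. \<exists>p\<in>P. N (\<lambda>i. y i - p i) \<le> r)"
proof -
  obtain Ys a where Ys: "\<forall>j<k. Ys j \<in> unit_ball k N"
    and a: "\<And>y. y \<in> unit_ball k N \<Longrightarrow> (\<forall>i<k. \<bar>a y i\<bar> \<le> 2) \<and> y = (\<lambda>j. \<Sum>i<k. a y i * Ys i j)"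
    using unit_ball_bounded_basis[OF N] by blast
  define h where "h = r / k"
  have h: "0 < h" using r k by (simp add: h_def)
  obtain P where P: "finite P" "P \<subseteq> unit_ball k N" "real (card P) \<le> (2 * 2 / h + 1) ^ k"
    and close: "\<forall>y\<in>unit_ball k N. \<exists>p\<in>P. \<forall>i<k. \<bar>a y i - a p i\<bar> \<le> h"
    using finite_grid_net[where c = 2 and B = "unit_ball k N" and a = a and k = k, OF h] a by auto
  have "N (\<lambda>j. y j - p j) \<le> r"
    if y: "y \<in> unit_ball k N" and p: "p \<in> unit_ball k N" and yp: "\<forall>i<k. \<bar>a y i - a p i\<bar> \<le> h" for y p
  proof -
    have "(\<lambda>j. y j - p j) = (\<lambda>j. \<Sum>i<k. (a y i - a p i) * Ys i j)"
      using a[OF y] a[OF p] by (auto simp: fun_eq_iff sum_subtractf left_diff_distrib)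
    then have "N (\<lambda>j. y j - p j) \<le> (\<Sum>i<k. \<bar>a y i - a p i\<bar> * N (Ys i))"
      using Ys by (auto intro!: is_norm_on_sum_le[OF N] simp: unit_ball_def)
    also have "\<dots> \<le> (\<Sum>i<k. h)"
    proof (rule sum_mono)
      fix i assume "i \<in> {..<k}"
      then have "\<bar>a y i - a p i\<bar> \<le> h" "0 \<le> N (Ys i)" "N (Ys i) \<le> 1"
        using yp Ys is_norm_on_nonneg[OF N] by (auto simp: unit_ball_def)
      then show "\<bar>a y i - a p i\<bar> * N (Ys i) \<le> h"
        using mult_mono[of "\<bar>a y i - a p i\<bar>" h "N (Ys i)" 1] h by simp
    qed
    also have "\<dots> = r" using k by (simp add: h_def)
    finally show ?thesis .
  qed
  moreover have "2 * 2 / h = 4 * real k / r" by (simp add: h_def)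
  ultimately show ?thesis using P close by (metis subsetD)
qed

section \<open>Lipschitz widths are bounded below by entropy numbers\<close>

lemma entropy_number_le:
  assumes "finite C" "card C \<le> 2 ^ m" "K \<subseteq> (\<Union>c\<in>C. cball c eps)" "eps > 0"
  shows "entropy_number K m \<le> eps"
  unfolding entropy_number_def
  by (rule cInf_lower) (use assms in \<open>auto intro: bdd_belowI[where m = 0]\<close>)

lemma lip_map_image_of_net_covers:
  fixes K :: "'a::real_normed_vector set" and \<Phi> :: "(nat \<Rightarrow> real) \<Rightarrow> 'a"
  assumes N: "is_norm_on k N" and Kb: "bounded K" and \<Phi>: "lip_map \<gamma> k N \<Phi>" and \<gamma>: "\<gamma> \<ge> 0"
    and approx: "(SUP f\<in>K. INF y\<in>unit_ball k N. norm (f - \<Phi> y)) < t"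
    and P: "P \<subseteq> unit_ball k N" and net: "\<forall>y\<in>unit_ball k N. \<exists>p\<in>P. N (\<lambda>i. y i - p i) \<le> r"
    and r: "\<gamma> * r \<le> t"
  shows "K \<subseteq> (\<Union>c\<in>\<Phi> ` P. cball c (2 * t))"
proof
  fix f assume f: "f \<in> K"
  have zero: "(\<lambda>_. 0) \<in> unit_ball k N"
    using is_norm_on_zero[OF N] Rk_zero by (simp add: unit_ball_def)
  have bdd_below: "bdd_below ((\<lambda>y. norm (g - \<Phi> y)) ` unit_ball k N)" for g
    by (rule bdd_belowI2[where m = 0]) simp
  obtain B where B: "\<And>g. g \<in> K \<Longrightarrow> norm g \<le> B" using Kb bounded_iff by blast
  have "bdd_above ((\<lambda>g. INF y\<in>unit_ball k N. norm (g - \<Phi> y)) ` K)"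
  proof (rule bdd_aboveI2[where M = "B + norm (\<Phi> (\<lambda>_. 0))"])
    fix g assume "g \<in> K"
    then show "(INF y\<in>unit_ball k N. norm (g - \<Phi> y)) \<le> B + norm (\<Phi> (\<lambda>_. 0))"
      using cINF_lower[OF bdd_below zero, of g] B[of g] norm_triangle_ineq4[of g "\<Phi> (\<lambda>_. 0)"]
      by linarith
  qed
  from cSUP_upper[OF f this] approx have "(INF y\<in>unit_ball k N. norm (f - \<Phi> y)) < t"
    by linarith
  then obtain y where y: "y \<in> unit_ball k N" and fy: "norm (f - \<Phi> y) < t"
    using cINF_less_iff[OF _ bdd_below] zero by blast
  obtain p where p: "p \<in> P" and yp: "N (\<lambda>i. y i - p i) \<le> r" using net y by blast
  have "norm (\<Phi> y - \<Phi> p) \<le> \<gamma> * N (\<lambda>i. y i - p i)"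
    using \<Phi> y p P unfolding lip_map_def by blast
  also have "\<dots> \<le> t" using yp \<gamma> r by (meson mult_left_mono order_trans)
  finally have "norm (f - \<Phi> p) \<le> 2 * t"
    using fy norm_triangle_ineq[of "f - \<Phi> y" "\<Phi> y - \<Phi> p"] by simp
  then show "f \<in> (\<Union>c\<in>\<Phi> ` P. cball c (2 * t))"
    using p by (auto simp: dist_norm norm_minus_commute)
qed

text \<open>The net of the parameter ball is taken at scale \<open>r = min 1 (t / \<gamma>)\<close>; its image
  under \<open>\<Phi>\<close> is then a \<open>2 t\<close>-net of \<open>K\<close>.\<close>

lemma lip_dist_ge_of_entropy:
  fixes K :: "'a::real_normed_vector set"
  assumes N: "is_norm_on k N" and k: "1 \<le> k" "k \<le> n" and \<gamma>: "\<gamma> > 0"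
    and Kb: "bounded K" and t: "t > 0"
    and m: "(4 * real n / min 1 (t / \<gamma>) + 1) ^ n \<le> 2 ^ m"
    and ent: "2 * t < entropy_number K m"
  shows "t \<le> lip_dist K \<gamma> k N"
  unfolding lip_dist_def
proof (rule cInf_greatest)
  have "lip_map \<gamma> k N (\<lambda>_. 0)"
    unfolding lip_map_def using is_norm_on_nonneg[OF N Rk_diff] \<gamma> by (auto simp: unit_ball_def)
  then show "{(SUP f\<in>K. INF y\<in>unit_ball k N. norm (f - \<Phi> y)) | \<Phi>. lip_map \<gamma> k N \<Phi>} \<noteq> {}"
    by blast
next
  fix x assume "x \<in> {(SUP f\<in>K. INF y\<in>unit_ball k N. norm (f - \<Phi> y)) | \<Phi>. lip_map \<gamma> k N \<Phi>}"
  then obtain \<Phi> where x: "x = (SUP f\<in>K. INF y\<in>unit_ball k N. norm (f - \<Phi> y))"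
    and \<Phi>: "lip_map \<gamma> k N \<Phi>" by blast
  show "t \<le> x"
  proof (rule ccontr)
    assume "\<not> t \<le> x"
    define r where "r = min 1 (t / \<gamma>)"
    have r: "0 < r" "\<gamma> * r \<le> t" using t \<gamma> by (auto simp: r_def min_def field_simps)
    obtain P where P: "finite P" "P \<subseteq> unit_ball k N" "real (card P) \<le> (4 * real k / r + 1) ^ k"
      and net: "\<forall>y\<in>unit_ball k N. \<exists>p\<in>P. N (\<lambda>i. y i - p i) \<le> r"
      using unit_ball_finite_net[OF N k(1) r(1)] by blast
    have "(4 * real k / r + 1) ^ k \<le> (4 * real n / r + 1) ^ k"
      using k r by (intro power_mono add_right_mono divide_right_mono) auto
    also have "\<dots> \<le> (4 * real n / r + 1) ^ n"
      using k r by (intro power_increasing) auto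
    finally have "real (card P) \<le> 2 ^ m" using P(3) m unfolding r_def by linarith
    then have "card P \<le> 2 ^ m" by (metis of_nat_le_iff of_nat_numeral of_nat_power)
    then have "card (\<Phi> ` P) \<le> 2 ^ m" using card_image_le[OF P(1), of \<Phi>] by linarith
    moreover have "K \<subseteq> (\<Union>c\<in>\<Phi> ` P. cball c (2 * t))"
      using \<open>\<not> t \<le> x\<close> \<gamma> by (intro lip_map_image_of_net_covers[OF N Kb \<Phi> _ _ P(2) net r(2)]) (auto simp: x)
    ultimately have "entropy_number K m \<le> 2 * t"
      by (rule entropy_number_le[OF finite_imageI[OF P(1)]]) (use t in simp)
    with ent show False by linarith
  qed
qed

lemma is_norm_on_1_abs: "is_norm_on 1 (\<lambda>y. \<bar>y 0\<bar>)"
proof -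
  have "y = (\<lambda>_. 0)" if "y \<in> Rk 1" "y 0 = 0" for y :: "nat \<Rightarrow> real"
  proof
    fix i show "y i = 0" using that by (cases i) (auto simp: Rk_def)
  qed
  then show ?thesis unfolding is_norm_on_def by (auto simp: abs_mult)
qed

lemma lipschitz_width_ge_of_entropy:
  fixes K :: "'a::real_normed_vector set"
  assumes n: "1 \<le> n" and \<gamma>: "\<gamma> > 0" and Kb: "bounded K" and t: "t > 0"
    and ent: "\<And>m. n \<le> m \<Longrightarrow> real m \<le> real n * log 2 (4 * real n / min 1 (t / \<gamma>) + 1) + 1 \<Longrightarrow>
                  2 * t < entropy_number K m"
  shows "t \<le> lipschitz_width K \<gamma> n"
proof -
  define R where "R = 4 * real n / min 1 (t / \<gamma>) + 1"
  define m where "m = nat \<lceil>real n * log 2 R\<rceil>"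
  have "4 * real n + 1 \<le> R"
    unfolding R_def using t \<gamma> n by (simp add: le_divide_eq)
  then have R: "0 < R" "1 \<le> log 2 R"
    using n by (auto simp: le_log_iff)
  then have "real n \<le> real n * log 2 R"
    by (metis mult.right_neutral mult_left_mono of_nat_0_le_iff)
  then have m: "real n * log 2 R \<le> real m" "real m \<le> real n * log 2 R + 1" "n \<le> m"
    unfolding m_def by linarith+
  have "R ^ n = (2 powr log 2 R) powr real n"
    using R by (simp add: powr_realpow)
  also have "\<dots> = 2 powr (real n * log 2 R)"
    by (simp add: powr_powr mult.commute)
  also have "\<dots> \<le> 2 ^ m"
    using m(1) by (simp add: powr_realpow [symmetric])
  finally have pow: "R ^ n \<le> 2 ^ m" .
  show ?thesis
    unfolding lipschitz_width_def
  proof (rule cInf_greatest)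
    show "{lip_dist K \<gamma> k N |k N. 1 \<le> k \<and> k \<le> n \<and> is_norm_on k N} \<noteq> {}"
      using n is_norm_on_1_abs by blast
  next
    fix x assume "x \<in> {lip_dist K \<gamma> k N |k N. 1 \<le> k \<and> k \<le> n \<and> is_norm_on k N}"
    then show "t \<le> x"
      using lip_dist_ge_of_entropy[OF _ _ _ \<gamma> Kb t pow[unfolded R_def] ent[OF m(3) m(2)[unfolded R_def]]]
      by blast
  qed
qed

section \<open>Bookkeeping of the rates\<close>

lemma log2_of_nat_le: "0 < n \<Longrightarrow> log 2 (real n) \<le> real n"
  by (intro log2_of_power_le) (auto intro: less_imp_le less_exp)

lemma exponential_net_scale_le:
  fixes n :: nat
  assumes n: "1 \<le> n" and lam: "1 \<le> lam" and C': "0 < C'" and \<eta>: "0 < \<eta>" and e: "0 \<le> e"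
    and b: "real n powr (- e) \<le> b"
  shows "4 * real n / min 1 (\<eta> * b / (C' * real n powr \<delta> * lam ^ n)) + 1
           \<le> (5 + 4 * C' / \<eta>) * (real n powr (1 + \<bar>\<delta>\<bar> + e) * lam ^ n)"
proof -
  define \<gamma> where "\<gamma> = C' * real n powr \<delta> * lam ^ n"
  define P where "P = real n powr (1 + \<bar>\<delta>\<bar> + e) * lam ^ n"
  have n1: "1 \<le> real n" using n by simp
  have lamn: "1 \<le> lam ^ n" using lam by simp
  have b0: "0 < b" using b n less_le_trans[of 0 "real n powr (- e)" b] by simp
  have \<gamma>: "0 < \<gamma>" unfolding \<gamma>_def using C' lam n by simp
  have nP: "real n \<le> P"
  proof -
    have "real n \<le> real n powr (1 + \<bar>\<delta>\<bar> + e)"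
      using powr_mono[of 1 "1 + \<bar>\<delta>\<bar> + e" "real n"] e n1 by simp
    moreover have "real n powr (1 + \<bar>\<delta>\<bar> + e) \<le> real n powr (1 + \<bar>\<delta>\<bar> + e) * lam ^ n"
      using mult_left_mono[OF lamn, of "real n powr (1 + \<bar>\<delta>\<bar> + e)"] by simp
    ultimately show ?thesis unfolding P_def by linarith
  qed
  have inv_r: "1 / min 1 (\<eta> * b / \<gamma>) \<le> 1 + \<gamma> / (\<eta> * b)"
    using \<eta> b0 \<gamma> by (cases "1 \<le> \<eta> * b / \<gamma>") (auto simp: min_def)
  have "\<gamma> / (\<eta> * b) = (C' / \<eta>) * real n powr \<delta> * lam ^ n * (1 / b)"
    unfolding \<gamma>_def by (simp add: field_simps)
  also have "\<dots> \<le> (C' / \<eta>) * real n powr \<bar>\<delta>\<bar> * lam ^ n * real n powr e"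
  proof -
    have "1 / b \<le> 1 / real n powr (- e)" using b b0 n by (intro divide_left_mono) auto
    moreover have "real n powr \<delta> \<le> real n powr \<bar>\<delta>\<bar>" by (rule powr_mono[OF _ n1]) simp
    ultimately show ?thesis
      using C' \<eta> lam b0 by (intro mult_mono) (auto simp: powr_minus_divide)
  qed
  also have "\<dots> = (C' / \<eta>) * P / real n"
    unfolding P_def using n1 by (simp add: powr_add field_simps)
  finally have \<gamma>_le: "\<gamma> / (\<eta> * b) \<le> (C' / \<eta>) * P / real n" .
  have "4 * real n / min 1 (\<eta> * b / \<gamma>) + 1 \<le> 4 * real n * (1 + \<gamma> / (\<eta> * b)) + 1"
    using mult_left_mono[OF inv_r, of "4 * real n"] by simp
  also have "\<dots> \<le> 4 * real n + (4 * C' / \<eta>) * P + 1"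
    using mult_left_mono[OF \<gamma>_le, of "4 * real n"] n1 by (simp add: algebra_simps)
  also have "\<dots> \<le> (5 + 4 * C' / \<eta>) * P"
    using nP n1 by (simp add: algebra_simps)
  finally show ?thesis unfolding \<gamma>_def P_def .
qed

lemma exponential_net_exponent_le:
  fixes n :: nat
  assumes n: "1 \<le> n" and lam: "1 \<le> lam" and C': "0 < C'" and \<eta>: "0 < \<eta>" and e: "0 \<le> e"
    and b: "real n powr (- e) \<le> b"
  shows "real n * log 2 (4 * real n / min 1 (\<eta> * b / (C' * real n powr \<delta> * lam ^ n)) + 1) + 1
           \<le> (log 2 (5 + 4 * C' / \<eta>) + (1 + \<bar>\<delta>\<bar> + e) + log 2 lam + 1) * real n ^ 2"
proof -
  define R where "R = 4 * real n / min 1 (\<eta> * b / (C' * real n powr \<delta> * lam ^ n)) + 1"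
  define A where "A = 5 + 4 * C' / \<eta>"
  define E where "E = 1 + \<bar>\<delta>\<bar> + e"
  define Q where "Q = log 2 A + E + log 2 lam"
  have n1: "1 \<le> real n" using n by simp
  have A: "1 \<le> A" using C' \<eta> by (simp add: A_def)
  have E: "1 \<le> E" using e by (simp add: E_def)
  have "0 < b" using b n less_le_trans[of 0 "real n powr (- e)" b] by simp
  then have "0 < min 1 (\<eta> * b / (C' * real n powr \<delta> * lam ^ n))"
    using \<eta> C' lam n by simp
  then have R: "0 < R" unfolding R_def by (intro add_nonneg_pos divide_nonneg_pos) auto
  have AP: "0 < A * (real n powr E * lam ^ n)" using A n1 lam by simp
  have "log 2 R \<le> log 2 (A * (real n powr E * lam ^ n))"
    using exponential_net_scale_le[OF assms, where \<delta> = \<delta>]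
    by (subst log_le_cancel_iff[OF _ R AP]) (auto simp: R_def A_def E_def)
  also have "\<dots> = log 2 A + E * log 2 (real n) + real n * log 2 lam"
    using A n1 lam by (simp add: log_mult log_powr log_nat_power)
  also have "\<dots> \<le> real n * log 2 A + E * real n + real n * log 2 lam"
    using A E n1 log2_of_nat_le[of n] n
    by (intro add_mono mult_left_mono) (auto intro: mult_le_cancel_right1[THEN iffD2])
  also have "\<dots> = real n * Q" unfolding Q_def by (simp add: algebra_simps)
  finally have "real n * log 2 R + 1 \<le> real n ^ 2 * Q + 1"
    using n1 by (simp add: power2_eq_square mult_left_mono mult.assoc)
  also have "\<dots> \<le> (Q + 1) * real n ^ 2"
    using n1 by (simp add: algebra_simps one_le_power)
  finally show ?thesis unfolding R_def Q_def A_def E_def .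
qed

lemma log2_le_log2_mult_log2:
  fixes n m :: nat
  assumes n: "2 \<le> n" and m: "real m \<le> c * real n ^ 2" "n \<le> m" and c: "1 \<le> c"
  shows "log 2 (real m) \<le> (log 2 c + 2) * log 2 (real n)"
proof -
  have L: "1 \<le> log 2 (real n)" using n by (subst le_log_iff) auto
  have "log 2 (real m) \<le> log 2 (c * real n ^ 2)"
    using m n c by (subst log_le_cancel_iff) auto
  also have "\<dots> = log 2 c + 2 * log 2 (real n)"
    using c n by (simp add: log_mult log_nat_power)
  also have "\<dots> \<le> (log 2 c + 2) * log 2 (real n)"
    using mult_left_mono[OF L, of "log 2 c"] c by (simp add: algebra_simps)
  finally show ?thesis .
qed

lemma powr_le_powr_abs_mult:
  fixes L L' W \<beta> :: real
  assumes L: "1 \<le> L" "L \<le> L'" "L' \<le> W * L" and W: "1 \<le> W"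
  shows "L powr \<beta> \<le> W powr \<bar>\<beta>\<bar> * L' powr \<beta>"
proof (cases "0 \<le> \<beta>")
  case True
  then have "L powr \<beta> \<le> L' powr \<beta>" using L by (intro powr_mono2) auto
  moreover have "1 \<le> W powr \<bar>\<beta>\<bar>" using W by (simp add: ge_one_powr_ge_zero)
  moreover have "0 \<le> L' powr \<beta>" by simp
  ultimately show ?thesis by (metis mult_right_mono mult_1 order_trans)
next
  case False
  then have "L powr \<beta> = W powr \<bar>\<beta>\<bar> * (W * L) powr \<beta>"
    using W L by (simp add: powr_mult powr_minus field_simps)
  also have "\<dots> \<le> W powr \<bar>\<beta>\<bar> * L' powr \<beta>"
    using False L W by (intro mult_left_mono powr_mono2') auto
  finally show ?thesis .
qed

lemma powr_neg_abs_le_powr: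
  fixes L x \<beta> :: real
  assumes "1 \<le> L" "L \<le> x"
  shows "x powr (- \<bar>\<beta>\<bar>) \<le> L powr \<beta>"
proof (cases "0 \<le> \<beta>")
  case True
  then have "x powr (- \<bar>\<beta>\<bar>) \<le> 1" using assms by (simp add: powr_minus_divide ge_one_powr_ge_zero)
  also have "1 \<le> L powr \<beta>" using assms True by (simp add: ge_one_powr_ge_zero)
  finally show ?thesis .
next
  case False
  then show ?thesis using assms by (simp add: powr_mono2')
qed

lemma log_rate_comparison:
  fixes n m :: nat and c \<alpha> \<beta> :: real
  assumes n: "2 \<le> n" and m: "n \<le> m" "real m \<le> c * real n ^ 2" and c: "1 \<le> c" and \<alpha>: "0 \<le> \<alpha>"
  shows "log 2 (real n) powr \<beta> / real n powr (2 * \<alpha>)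
           \<le> c powr \<alpha> * (log 2 c + 2) powr \<bar>\<beta>\<bar> * (log 2 (real m) powr \<beta> / real m powr \<alpha>)"
proof -
  define W where "W = log 2 c + 2"
  define Lm where "Lm = log 2 (real m) powr \<beta>"
  have W: "1 \<le> W" using c by (simp add: W_def)
  have np: "0 < real n" and mp: "0 < real m" using n m by auto
  have L: "1 \<le> log 2 (real n)" using n by (simp add: le_log_iff)
  have "log 2 (real n) \<le> log 2 (real m)" using m np by simp
  moreover have "log 2 (real m) \<le> W * log 2 (real n)"
    unfolding W_def by (rule log2_le_log2_mult_log2[OF n m(2,1) c])
  ultimately have "log 2 (real n) powr \<beta> \<le> W powr \<bar>\<beta>\<bar> * Lm"
    unfolding Lm_def by (rule powr_le_powr_abs_mult[OF L _ _ W])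
  then have "log 2 (real n) powr \<beta> / real n powr (2 * \<alpha>) \<le> W powr \<bar>\<beta>\<bar> * Lm / real n powr (2 * \<alpha>)"
    by (rule divide_right_mono) simp
  also have "\<dots> = c powr \<alpha> * W powr \<bar>\<beta>\<bar> * Lm / (c powr \<alpha> * real n powr (2 * \<alpha>))"
    using c by simp
  also have "\<dots> \<le> c powr \<alpha> * W powr \<bar>\<beta>\<bar> * Lm / real m powr \<alpha>"
  proof (rule divide_left_mono)
    have "real m powr \<alpha> \<le> (c * real n ^ 2) powr \<alpha>" using m(2) mp \<alpha> by (intro powr_mono2) auto
    also have "\<dots> = c powr \<alpha> * (real n ^ 2) powr \<alpha>"
      using c by (subst powr_mult) auto
    also have "(real n ^ 2) powr \<alpha> = real n powr (2 * \<alpha>)"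
      using np powr_powr[of "real n" 2 \<alpha>] by (simp add: powr_numeral)
    finally show "real m powr \<alpha> \<le> c powr \<alpha> * real n powr (2 * \<alpha>)" .
  qed (use c np mp in \<open>auto simp: Lm_def\<close>)
  finally show ?thesis by (simp add: W_def Lm_def)
qed

lemma exists_scale_absorbing_log_factors:
  fixes A c1 E a p :: real
  assumes "0 < A" "0 < c1"
  shows "\<exists>\<eta>>0. 2 * \<eta> * ((log 2 (5 + A / \<eta>) + E) powr a
                      * (log 2 (log 2 (5 + A / \<eta>) + E) + 2) powr p) < c1"
proof -
  have "((\<lambda>\<eta>. 2 * \<eta> * ((log 2 (5 + A / \<eta>) + E) powr a
                      * (log 2 (log 2 (5 + A / \<eta>) + E) + 2) powr p)) \<longlongrightarrow> 0) (at_right 0)"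
    using assms(1) by real_asymp
  then have "\<forall>\<^sub>F \<eta> in at_right 0. 2 * \<eta> * ((log 2 (5 + A / \<eta>) + E) powr a
                      * (log 2 (log 2 (5 + A / \<eta>) + E) + 2) powr p) < c1"
    using assms(2) by (rule order_tendstoD(2))
  then have "\<forall>\<^sub>F \<eta> in at_right 0. 0 < \<eta> \<and> 2 * \<eta> * ((log 2 (5 + A / \<eta>) + E) powr a
                      * (log 2 (log 2 (5 + A / \<eta>) + E) + 2) powr p) < c1"
    using eventually_at_right_less by (rule eventually_conj[rotated])
  then show ?thesis
    using eventually_happens'[OF trivial_limit_at_right_real] by blast
qed

text \<open>The scale \<open>\<eta>\<close> enters the covering exponent only through \<open>log (1 / \<eta>)\<close>, so that it can be
  chosen small enough to absorb all constants.\<close>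

lemma lipschitz_width_lower_bound:
  fixes K :: "'a::real_normed_vector set" and c1 \<alpha> \<beta> :: real
  assumes K: "bounded K" and lam: "lam > 1" and C': "C' > 0" and c1: "c1 > 0" and \<alpha>: "\<alpha> \<ge> 0"
    and ent: "\<forall>n::nat\<ge>2. entropy_number K n > c1 * (log 2 (real n)) powr \<beta> / real n powr \<alpha>"
  shows "\<exists>C>0. \<forall>n::nat\<ge>2. lipschitz_width K (C' * real n powr \<delta> * lam ^ n) n
                             \<ge> C * (log 2 (real n)) powr \<beta> / real n powr (2 * \<alpha>)"
proof -
  define e where "e = 2 * \<alpha> + \<bar>\<beta>\<bar>"
  define E where "E = (1 + \<bar>\<delta>\<bar> + e) + log 2 lam + 1"
  define c where "c \<eta> = log 2 (5 + 4 * C' / \<eta>) + E" for \<eta>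
  define G where "G \<eta> = c \<eta> powr \<alpha> * (log 2 (c \<eta>) + 2) powr \<bar>\<beta>\<bar>" for \<eta>
  obtain \<eta> where \<eta>: "0 < \<eta>" and small: "2 * \<eta> * G \<eta> < c1"
    using exists_scale_absorbing_log_factors[of "4 * C'" c1 E \<alpha> "\<bar>\<beta>\<bar>"] C' c1
    unfolding G_def c_def by auto
  have "1 \<le> 5 + 4 * C' / \<eta>" using \<eta> C' by simp
  then have "0 \<le> log 2 (5 + 4 * C' / \<eta>)" by simp
  moreover have "0 \<le> log 2 lam" "0 \<le> e" using lam \<alpha> by (simp_all add: e_def)
  ultimately have c: "1 \<le> c \<eta>"
    unfolding c_def E_def by linarith
  show ?thesis
  proof (intro exI[of _ \<eta>] conjI allI impI \<eta>)
    fix n :: nat assume n: "2 \<le> n"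
    define b where "b = log 2 (real n) powr \<beta> / real n powr (2 * \<alpha>)"
    have L: "1 \<le> log 2 (real n)" "log 2 (real n) \<le> real n"
      using n log2_of_nat_le[of n] by (auto simp: le_log_iff)
    have "real n powr (- e) = real n powr (- \<bar>\<beta>\<bar>) / real n powr (2 * \<alpha>)"
      unfolding e_def by (simp add: powr_diff [symmetric] algebra_simps)
    also have "\<dots> \<le> b"
      unfolding b_def using powr_neg_abs_le_powr[OF L] by (intro divide_right_mono) auto
    finally have b: "real n powr (- e) \<le> b" .
    have "\<eta> * b \<le> lipschitz_width K (C' * real n powr \<delta> * lam ^ n) n"
    proof (rule lipschitz_width_ge_of_entropy)
      have "log 2 (real n) \<noteq> 0" using L(1) by linarith
      then show "1 \<le> n" "bounded K" "0 < C' * real n powr \<delta> * lam ^ n" "0 < \<eta> * b"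
        using n K C' lam \<eta> by (auto simp: b_def)
      fix m :: nat
      assume m: "n \<le> m"
        "real m \<le> real n * log 2 (4 * real n / min 1 (\<eta> * b / (C' * real n powr \<delta> * lam ^ n)) + 1) + 1"
      then have mc: "real m \<le> c \<eta> * real n ^ 2"
        using exponential_net_exponent_le[where \<delta> = \<delta>, of n lam C' \<eta> e b] n lam C' \<eta> \<alpha> b
        unfolding c_def E_def e_def by (simp add: add.assoc)
      define \<rho> where "\<rho> = log 2 (real m) powr \<beta> / real m powr \<alpha>"
      have "b \<le> G \<eta> * \<rho>"
        unfolding b_def G_def \<rho>_def using log_rate_comparison[OF n m(1) mc c \<alpha>] by simp
      then have "2 * (\<eta> * b) \<le> 2 * \<eta> * G \<eta> * \<rho>"
        using mult_left_mono[of b "G \<eta> * \<rho>" "2 * \<eta>"] \<eta> by (simp add: mult.assoc)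
      also have "\<dots> < c1 * \<rho>"
      proof (rule mult_strict_right_mono[OF small])
        have "1 \<le> log 2 (real m)" using m n by (simp add: le_log_iff)
        then have "log 2 (real m) \<noteq> 0" by linarith
        then show "0 < \<rho>" using m n by (simp add: \<rho>_def)
      qed
      also have "\<dots> < entropy_number K m"
        using ent m n unfolding \<rho>_def by auto
      finally show "2 * (\<eta> * b) < entropy_number K m" .
    qed
    then show "\<eta> * log 2 (real n) powr \<beta> / real n powr (2 * \<alpha>)
                 \<le> lipschitz_width K (C' * real n powr \<delta> * lam ^ n) n"
      by (simp add: b_def)
  qed
qed

theorem theorem7p3:
  fixes K :: "'a::banach set" and \<delta> lam C' :: real
  assumes "compact K" and "lam > 1" and "C' > 0"
  defines "\<gamma> \<equiv> (\<lambda>n::nat. C' * real n powr \<delta> * lam ^ n)"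
  shows
    "(\<forall>c1 \<alpha> \<beta>::real. c1 > 0 \<and> \<alpha> > 0 \<and>
        (\<forall>n::nat\<ge>2. entropy_number K n > c1 * (log 2 (real n)) powr \<beta> / real n powr \<alpha>) \<longrightarrow>
        (\<exists>C>0. \<forall>n::nat\<ge>2. lipschitz_width K (\<gamma> n) n \<ge> C * (log 2 (real n)) powr \<beta> / real n powr (2 * \<alpha>)))
     \<and>
     (\<forall>c1 \<alpha>::real. c1 > 0 \<and> \<alpha> > 0 \<and>
        (\<forall>n::nat\<ge>2. entropy_number K n > c1 * (log 2 (real n)) powr (- \<alpha>)) \<longrightarrow>
        (\<exists>C>0. \<forall>n::nat\<ge>2. lipschitz_width K (\<gamma> n) n \<ge> C * (log 2 (real n)) powr (- \<alpha>)))"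
proof -
  have K: "bounded K" using \<open>compact K\<close> by (rule compact_imp_bounded)
  note lower_bound = lipschitz_width_lower_bound[OF K \<open>lam > 1\<close> \<open>C' > 0\<close>, where \<delta> = \<delta>]
  have "\<exists>C>0. \<forall>n::nat\<ge>2. lipschitz_width K (\<gamma> n) n \<ge> C * (log 2 (real n)) powr (- \<alpha>)"
    if "c1 > 0" and ent: "\<forall>n::nat\<ge>2. entropy_number K n > c1 * (log 2 (real n)) powr (- \<alpha>)"
    for c1 \<alpha> :: real
  proof -
    \<comment> \<open>the second rate is the first one with the power of \<open>n\<close> set to \<open>0\<close>\<close>
    have "\<forall>n::nat\<ge>2. entropy_number K n > c1 * (log 2 (real n)) powr (- \<alpha>) / real n powr 0"
      using ent by simp
    from lower_bound[OF \<open>c1 > 0\<close> _ this] show ?thesis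
      unfolding \<gamma>_def by simp
  qed
  moreover have "\<exists>C>0. \<forall>n::nat\<ge>2. lipschitz_width K (\<gamma> n) n \<ge> C * (log 2 (real n)) powr \<beta> / real n powr (2 * \<alpha>)"
    if "c1 > 0" "\<alpha> > 0"
      and "\<forall>n::nat\<ge>2. entropy_number K n > c1 * (log 2 (real n)) powr \<beta> / real n powr \<alpha>"
    for c1 \<alpha> \<beta> :: real
    using lower_bound[OF that(1) _ that(3)] that(2) unfolding \<gamma>_def by simp
  ultimately show ?thesis by blast
qed

end
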